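(* For every $k\ge1$ for which $\beta_0,\dots,\beta_k$ are defined, the subgroup $\Gamma_k=\langle\beta_0,\beta_1,\dots,\beta_k\rangle$ of $\mathbb{Q}$ equals $\frac{1}{Q_k}\mathbb{Z}$.
   Context: Setting: $k$ (the field) is algebraically closed of characteristic $0$; $\nu^*$ is a $k$-valuation of a function field $K^*$ of transcendence degree $2$ whose value group is a subgroup of $\mathbb{Q}$ and whose residue field is $k$; $S$ is an algebraic two-dimensional regular local ring with quotient field $K^*$ dominated by $V^*$, with regular parameters $(x,y)$, and $\nu^*(x)=1$. Jumping polynomials: $T_0=x$, $T_1=y$, $q_0=\infty$, $p_1,q_1$ coprime positive integers with $\nu^*(y)=p_1/q_1$; for $i\ge1$, $n_{i,j}$ ($0\le j<i$) are nonnegative integers with $n_{i,j}<q_j$ and $q_i\nu^*(T_i)=\sum_{j<i}n_{i,j}\nu^*(T_j)$, $\lambda_i\in k$ is the residue of $T_i^{q_i}/\prod_{j<i}T_j^{n_{i,j}}$, $T_{i+1}=T_i^{q_i}-\lambda_i\prod_{j<i}T_j^{n_{i,j}}$, and $p_{i+1},q_{i+1}$ are coprime positive integers with $\nu^*(T_{i+1})=q_i\nu^*(T_i)+\frac{1}{q_1\cdots q_i}\frac{p_{i+1}}{q_{i+1}}$. Put $\beta_i=\nu^*(T_i)$, $Q_i=q_1\cdots q_i$. *)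

theory Defs
  imports Complex_Main "HOL-Computational_Algebra.Primes"
begin

definition gen_subgroup :: "(nat \<Rightarrow> rat) \<Rightarrow> nat \<Rightarrow> rat set" where
  "gen_subgroup beta k = {(\<Sum>i\<le>k. of_int (c i) * beta i) | c :: nat \<Rightarrow> int. True}"

definition Qprod :: "(nat \<Rightarrow> nat) \<Rightarrow> nat \<Rightarrow> nat" where
  "Qprod q i = (\<Prod>j=1..i. q j)"

end

theory Submission
  imports Defs
begin

text \<open>By induction on \<open>k\<close>: \<open>\<Gamma>\<^sub>k = \<Gamma>\<^sub>k\<^sub>-\<^sub>1 + \<int>\<beta>\<^sub>k\<close>, and the defining recursion
  shows \<open>\<beta>\<^sub>k \<equiv> p\<^sub>k/Q\<^sub>k\<close> modulo \<open>\<Gamma>\<^sub>k\<^sub>-\<^sub>1\<close>, which by induction is \<open>(1/Q\<^sub>k\<^sub>-\<^sub>1)\<int>\<close>.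
  Adjoining \<open>p\<^sub>k/Q\<^sub>k\<close> to \<open>(1/Q\<^sub>k\<^sub>-\<^sub>1)\<int>\<close> gives \<open>(1/Q\<^sub>k)\<int>\<close>, because \<open>Q\<^sub>k = Q\<^sub>k\<^sub>-\<^sub>1 q\<^sub>k\<close>
  and a Bezout relation \<open>u p\<^sub>k + v q\<^sub>k = 1\<close> produces \<open>1/Q\<^sub>k\<close>.\<close>

lemma Qprod_0 [simp]: "Qprod q 0 = 1"
  by (simp add: Qprod_def)

lemma Qprod_Suc: "Qprod q (Suc i) = Qprod q i * q (Suc i)"
  by (simp add: Qprod_def prod.nat_ivl_Suc' mult.commute)

lemma Qprod_pos: "(\<And>j. 1 \<le> j \<Longrightarrow> j \<le> i \<Longrightarrow> q j > 0) \<Longrightarrow> Qprod q i > 0"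
  unfolding Qprod_def by (auto intro!: prod_pos)

lemma gen_subgroup_0: "gen_subgroup beta 0 = {of_int m * beta 0 | m. True}"
  unfolding gen_subgroup_def by simp (fastforce intro: exI[of _ "\<lambda>_. _"])

lemma gen_subgroup_Suc:
  "gen_subgroup beta (Suc i) = {g + of_int c * beta (Suc i) | g c. g \<in> gen_subgroup beta i}"
proof (intro set_eqI iffI)
  fix z assume "z \<in> gen_subgroup beta (Suc i)"
  then obtain c where "z = (\<Sum>j\<le>Suc i. of_int (c j) * beta j)"
    unfolding gen_subgroup_def by auto
  then show "z \<in> {g + of_int c * beta (Suc i) | g c. g \<in> gen_subgroup beta i}"
    unfolding gen_subgroup_def by auto
next
  fix z assume "z \<in> {g + of_int c * beta (Suc i) | g c. g \<in> gen_subgroup beta i}"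
  then obtain c d where z: "z = (\<Sum>j\<le>i. of_int (d j) * beta j) + of_int c * beta (Suc i)"
    unfolding gen_subgroup_def by auto
  have "(\<Sum>j\<le>i. of_int ((d(Suc i := c)) j) * beta j) = (\<Sum>j\<le>i. of_int (d j) * beta j)"
    by (intro sum.cong) auto
  then have "z = (\<Sum>j\<le>Suc i. of_int ((d(Suc i := c)) j) * beta j)"
    using z by simp
  then show "z \<in> gen_subgroup beta (Suc i)"
    unfolding gen_subgroup_def by blast
qed

lemma int_mult_beta_in_gen_subgroup:
  assumes "j \<le> i"
  shows "of_int c * beta j \<in> gen_subgroup beta i"
proof -
  have "(\<Sum>l\<le>i. of_int (if l = j then c else 0) * beta l)
      = (\<Sum>l\<le>i. if l = j then of_int c * beta l else 0)"
    by (intro sum.cong) auto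
  also have "\<dots> = of_int c * beta j"
    using assms by simp
  finally show ?thesis
    unfolding gen_subgroup_def by (intro CollectI exI[of _ "\<lambda>l. if l = j then c else 0"]) simp
qed

lemma adjoin_coprime_fraction:
  fixes Q q :: nat and p a :: int
  assumes "Q > 0" "q > 0" "coprime p (int q)"
  defines "b \<equiv> (of_int a + of_int p / of_nat q) / of_nat Q :: 'a :: field_char_0"
  shows "{g + of_int c * b | g c. g \<in> {of_int m / of_nat Q | m :: int. True}}
         = {of_int m / of_nat (Q * q) | m :: int. True}"
proof (intro set_eqI iffI)
  fix z :: 'a assume "z \<in> {g + of_int c * b | g c. g \<in> {of_int m / of_nat Q | m :: int. True}}"
  then obtain m c where "z = of_int m / of_nat Q + of_int c * b" by auto
  then have "z = of_int (m * q + c * a * q + c * p) / of_nat (Q * q)"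
    using assms(1,2) by (simp add: b_def field_simps)
  then show "z \<in> {of_int m / of_nat (Q * q) | m :: int. True}" by blast
next
  fix z :: 'a assume "z \<in> {of_int m / of_nat (Q * q) | m :: int. True}"
  then obtain m where z: "z = of_int m / of_nat (Q * q)" by auto
  obtain u v where "u * p + v * int q = 1"
    using bezout_int[of p "int q"] assms(3) by (auto simp: coprime_iff_gcd_eq_1)
  then have bezout: "(of_int u * of_int p + of_int v * of_nat q :: 'a) = 1"
    by (metis of_int_1 of_int_add of_int_mult of_int_of_nat_eq)
  have "of_int (m * v - m * u * a) / of_nat Q + of_int (m * u) * b
      = of_int m * (of_int u * of_int p + of_int v * of_nat q) / (of_nat Q * of_nat q)"
    using assms(1,2) by (simp add: b_def field_simps)
  then have "z = of_int (m * v - m * u * a) / of_nat Q + of_int (m * u) * b"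
    unfolding z bezout by simp
  then show "z \<in> {g + of_int c * b | g c. g \<in> {of_int m / of_nat Q | m :: int. True}}"
    by (intro CollectI exI[of _ "of_int (m * v - m * u * a) / of_nat Q"] exI[of _ "m * u"]) blast
qed

lemma gen_subgroup_eq_Qprod_multiples:
  fixes beta :: "nat \<Rightarrow> rat" and p q :: "nat \<Rightarrow> nat"
  assumes beta0: "beta 0 = 1"
    and q_pos: "\<And>i. 1 \<le> i \<Longrightarrow> i \<le> k \<Longrightarrow> q i > 0"
    and coprime: "\<And>i. 1 \<le> i \<Longrightarrow> i \<le> k \<Longrightarrow> coprime (p i) (q i)"
    and step: "\<And>i. i < k \<Longrightarrow>
      beta (Suc i) - of_nat (p (Suc i)) / of_nat (Qprod q (Suc i)) \<in> gen_subgroup beta i"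
  shows "gen_subgroup beta k = {of_int m / of_nat (Qprod q k) | m :: int. True}"
  using step q_pos coprime
proof (induction k)
  case 0
  show ?case
    by (simp add: gen_subgroup_0 beta0)
next
  case (Suc i)
  have IH: "gen_subgroup beta i = {of_int m / of_nat (Qprod q i) | m :: int. True}"
    using Suc by simp
  obtain a where "beta (Suc i) - of_nat (p (Suc i)) / of_nat (Qprod q (Suc i))
      = of_int a / of_nat (Qprod q i)"
    using Suc.prems(1)[of i] IH by auto
  then have beta_Suc:
    "beta (Suc i) = (of_int a + of_int (p (Suc i)) / of_nat (q (Suc i))) / of_nat (Qprod q i)"
    by (simp add: Qprod_Suc add_divide_distrib eq_diff_eq mult.commute)
  have "Qprod q i > 0" "q (Suc i) > 0" "coprime (int (p (Suc i))) (int (q (Suc i)))"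
    using Suc.prems(2,3) by (auto intro: Qprod_pos)
  then have "{g + of_int c * beta (Suc i) | g c. g \<in> {of_int m / of_nat (Qprod q i) | m :: int. True}}
      = {of_int m / of_nat (Qprod q i * q (Suc i)) | m :: int. True}"
    unfolding beta_Suc by (rule adjoin_coprime_fraction)
  then show ?case
    by (simp add: gen_subgroup_Suc IH Qprod_Suc)
qed

theorem corollary5p4:
  fixes beta :: "nat \<Rightarrow> rat" and p q :: "nat \<Rightarrow> nat" and n :: "nat \<Rightarrow> nat \<Rightarrow> nat"
    and k :: nat
  assumes k1: "k \<ge> 1"
    and beta0: "beta 0 = 1"
    and pq_pos: "\<And>i. 1 \<le> i \<Longrightarrow> i \<le> k \<Longrightarrow> p i > 0 \<and> q i > 0"
    and pq_coprime: "\<And>i. 1 \<le> i \<Longrightarrow> i \<le> k \<Longrightarrow> coprime (p i) (q i)"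
    and beta1: "beta 1 = of_nat (p 1) / of_nat (q 1)"
    and n_bound: "\<And>i j. 1 \<le> i \<Longrightarrow> i < k \<Longrightarrow> 1 \<le> j \<Longrightarrow> j < i \<Longrightarrow> n i j < q j"
    and n_rel: "\<And>i. 1 \<le> i \<Longrightarrow> i < k \<Longrightarrow>
                 of_nat (q i) * beta i = (\<Sum>j<i. of_nat (n i j) * beta j)"
    and beta_rec: "\<And>i. 1 \<le> i \<Longrightarrow> i < k \<Longrightarrow>
                 beta (Suc i) = of_nat (q i) * beta i
                   + (1 / of_nat (Qprod q i)) * (of_nat (p (Suc i)) / of_nat (q (Suc i)))"
  shows "gen_subgroup beta k = {of_int m / of_nat (Qprod q k) | m :: int. True}"
proof (rule gen_subgroup_eq_Qprod_multiples)
  fix i assume "i < k"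
  show "beta (Suc i) - of_nat (p (Suc i)) / of_nat (Qprod q (Suc i)) \<in> gen_subgroup beta i"
  proof (cases "i = 0")
    case True
    have "beta (Suc 0) = of_nat (p (Suc 0)) / of_nat (q (Suc 0))"
      using beta1 by simp
    then show ?thesis
      using True int_mult_beta_in_gen_subgroup[of 0 0 0 beta] by (simp add: Qprod_def)
  next
    case False
    have "Qprod q i > 0" "q (Suc i) > 0"
      using pq_pos \<open>i < k\<close> by (auto intro: Qprod_pos)
    then have "beta (Suc i) - of_nat (p (Suc i)) / of_nat (Qprod q (Suc i)) = of_int (q i) * beta i"
      using beta_rec[of i] False \<open>i < k\<close> by (simp add: Qprod_Suc)
    then show ?thesis
      using int_mult_beta_in_gen_subgroup[of i i "int (q i)" beta] by simp
  qed
qed (simp_all add: beta0 pq_pos pq_coprime)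

end
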